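(* Let $K$ be a positive definite field and $E$ the graph with one vertex and two loops $a,b$. Then $L_K(E)$ is graded $*$-regular but is neither graded unit-regular nor graded directly finite.
   Context: $L_K(E)$ is the unital $K$-algebra generated by $a,b,a^*,b^*$ with identity $v$ (the vertex) subject to $a^*a=b^*b=1$, $a^*b=b^*a=0$, $aa^*+bb^*=1$; it is $\mathbb Z$-graded with $\deg a=\deg b=1$, $\deg a^*=\deg b^*=-1$, and has the involution $(\sum k_ipq^* )^*=\sum k_i^*qp^*$ induced from the involution of $K$. $K$ positive definite: $\sum k_ik_i^*=0\Rightarrow$ all $k_i=0$. A unital graded $*$-ring is graded $*$-regular if for every homogeneous $x$ there is a homogeneous projection $p$ ($p=p^2=p^*$) with $xA=pA$. Graded unit-regular: for every homogeneous $x$ there is an invertible homogeneous $y$ with $xyx=x$. Graded directly finite: for homogeneous $x,y$, $xy=1$ implies $yx=1$. *)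

theory Defs
  imports "HOL-Library.Poly_Mapping"
begin

datatype lett = La | Lb | Las | Lbs

datatype word = Word "lett list"

instantiation word :: monoid_add
begin
fun plus_word :: "word \<Rightarrow> word \<Rightarrow> word" where
  "plus_word (Word u) (Word v) = Word (u @ v)"
definition zero_word :: word where "zero_word = Word []"
instance
proof
  fix a b c :: word
  show "a + b + c = a + (b + c)" by (cases a; cases b; cases c) simp
  show "0 + a = a" by (cases a) (simp add: zero_word_def)
  show "a + 0 = a" by (cases a) (simp add: zero_word_def)
qed
end

text \<open>Free unital K-algebra K<a,b,a*,b*>: finitely supported K-valued functions on words,
  with the convolution product (word concatenation). Scalars are Poly_Mapping.single 0 c.\<close>
type_synonym 'k freealg = "word \<Rightarrow>\<^sub>0 'k"

definition gen :: "lett \<Rightarrow> 'k::ring_1 freealg" where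
  "gen l = Poly_Mapping.single (Word [l]) 1"

fun ldeg :: "lett \<Rightarrow> int" where
  "ldeg La = 1" | "ldeg Lb = 1" | "ldeg Las = -1" | "ldeg Lbs = -1"

fun wdeg :: "word \<Rightarrow> int" where
  "wdeg (Word u) = sum_list (map ldeg u)"

fun lstar :: "lett \<Rightarrow> lett" where
  "lstar La = Las" | "lstar Lb = Lbs" | "lstar Las = La" | "lstar Lbs = Lb"

fun wstar :: "word \<Rightarrow> word" where
  "wstar (Word u) = Word (rev (map lstar u))"

definition fa_star :: "('k::ring_1 \<Rightarrow> 'k) \<Rightarrow> 'k freealg \<Rightarrow> 'k freealg" where
  "fa_star \<sigma> x = Poly_Mapping.map \<sigma> (Poly_Mapping.map_key wstar x)"

definition two_sided_ideal :: "'k::ring_1 freealg set \<Rightarrow> bool" where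
  "two_sided_ideal J \<longleftrightarrow> 0 \<in> J \<and> (\<forall>x\<in>J. \<forall>y\<in>J. x + y \<in> J)
     \<and> (\<forall>x\<in>J. \<forall>r. r * x \<in> J \<and> x * r \<in> J)"

definition leavitt_relations :: "'k::ring_1 freealg set" where
  "leavitt_relations =
     { gen Las * gen La - 1, gen Lbs * gen Lb - 1,
       gen Las * gen Lb, gen Lbs * gen La,
       gen La * gen Las + gen Lb * gen Lbs - 1 }"

text \<open>The ideal generated by the relations; L_K(E) = freealg / lv_ideal
  (the identity 1 of the free algebra is the vertex v).\<close>
definition lv_ideal :: "'k::ring_1 freealg set" where
  "lv_ideal = \<Inter> {J. two_sided_ideal J \<and> leavitt_relations \<subseteq> J}"

definition lv_eq :: "'k::ring_1 freealg \<Rightarrow> 'k freealg \<Rightarrow> bool" where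
  "lv_eq x y \<longleftrightarrow> x - y \<in> lv_ideal"

text \<open>The class of x is homogeneous in the induced Z-grading of L_K(E)
  (L_K(E)_d = image of the degree-d part of the free algebra).\<close>
definition lv_homog :: "'k::ring_1 freealg \<Rightarrow> bool" where
  "lv_homog x \<longleftrightarrow> (\<exists>y d. lv_eq x y \<and> (\<forall>w\<in>Poly_Mapping.keys y. wdeg w = d))"

definition lv_unit :: "'k::ring_1 freealg \<Rightarrow> bool" where
  "lv_unit y \<longleftrightarrow> (\<exists>z. lv_eq (y * z) 1 \<and> lv_eq (z * y) 1)"

text \<open>Graded *-regular: for every homogeneous x there is a homogeneous projection p
  (p = p^2 = p^*) with xA = pA, i.e. x \<in> pA and p \<in> xA.\<close>
definition lv_graded_star_regular :: "('k::ring_1 \<Rightarrow> 'k) \<Rightarrow> bool" where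
  "lv_graded_star_regular \<sigma> \<longleftrightarrow>
    (\<forall>x::'k freealg. lv_homog x \<longrightarrow>
       (\<exists>p. lv_homog p \<and> lv_eq (p * p) p \<and> lv_eq (fa_star \<sigma> p) p
            \<and> (\<exists>y. lv_eq x (p * y)) \<and> (\<exists>z. lv_eq p (x * z))))"

definition lv_graded_unit_regular :: "'k::ring_1 itself \<Rightarrow> bool" where
  "lv_graded_unit_regular _ \<longleftrightarrow>
    (\<forall>x::'k freealg. lv_homog x \<longrightarrow>
       (\<exists>y. lv_homog y \<and> lv_unit y \<and> lv_eq (x * y * x) x))"

definition lv_graded_directly_finite :: "'k::ring_1 itself \<Rightarrow> bool" where
  "lv_graded_directly_finite _ \<longleftrightarrow>
    (\<forall>x y :: 'k freealg. lv_homog x \<and> lv_homog y \<and> lv_eq (x * y) 1 \<longrightarrow> lv_eq (y * x) 1)"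

definition field_involution :: "('k::field \<Rightarrow> 'k) \<Rightarrow> bool" where
  "field_involution \<sigma> \<longleftrightarrow> (\<forall>x y. \<sigma> (x + y) = \<sigma> x + \<sigma> y) \<and>
     (\<forall>x y. \<sigma> (x * y) = \<sigma> x * \<sigma> y) \<and> (\<forall>x. \<sigma> (\<sigma> x) = x)"

definition positive_definite :: "('k::field \<Rightarrow> 'k) \<Rightarrow> bool" where
  "positive_definite \<sigma> \<longleftrightarrow>
     (\<forall>(n::nat) (k::nat \<Rightarrow> 'k). (\<Sum>i<n. k i * \<sigma> (k i)) = 0 \<longrightarrow> (\<forall>i<n. k i = 0))"

end

theory Submission
  imports Defs
begin

text \<open>
  For every n the vertex decomposes as \<open>1 = \<Sum>\<^bsub>|\<mu>| = n\<^esub> \<mu> \<mu>\<^sup>*\<close> over the real paths \<mu> of length n.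
  If x is homogeneous of degree d and n is large, each \<open>x \<mu>\<close> reduces, by the relations
  \<open>a\<^sup>*a = b\<^sup>*b = 1\<close>, \<open>a\<^sup>*b = b\<^sup>*a = 0\<close>, to a linear combination of real paths of length \<open>n + d\<close>.
  Real paths of equal length are orthonormal for \<open>\<langle>u, v\<rangle> = u\<^sup>* v\<close>, and positive definiteness
  makes this inner product anisotropic, so Gram--Schmidt applied to the finitely many \<open>x \<mu>\<close>
  yields a degree-0 projection \<open>P = \<Sum> w w\<^sup>* / \<langle>w, w\<rangle>\<close> in \<open>xA\<close> fixing every \<open>x \<mu>\<close>;
  then \<open>P x = \<Sum> P x \<mu> \<mu>\<^sup>* = x\<close>, hence \<open>xA = PA\<close>.

  On the other hand \<open>a\<^sup>*a = 1 \<noteq> a a\<^sup>*\<close>, the latter seen in the representation on functions of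
  infinite binary sequences, where \<open>a\<^sup>*\<close> prepends a bit and \<open>a\<close> tests and drops it.
  So \<open>a\<^sup>*\<close> is a one-sided inverse that is not two-sided, and if \<open>a\<^sup>* u a\<^sup>* = a\<^sup>*\<close> with u a unit,
  then \<open>u = a\<close> and \<open>u\<^sup>-\<^sup>1 = a\<^sup>*\<close>, forcing \<open>a a\<^sup>* = 1\<close>.
\<close>

lemma poly_mapping_induct [case_names zero single_add]:
  assumes "P 0"
    and "\<And>a b f. a \<notin> Poly_Mapping.keys f \<Longrightarrow> b \<noteq> 0 \<Longrightarrow> P f \<Longrightarrow>
          Poly_Mapping.keys (Poly_Mapping.single a b + f) = insert a (Poly_Mapping.keys f) \<Longrightarrow>
          P (Poly_Mapping.single a b + f)"
  shows "P f"
proof (induction f rule: Poly_Mapping.update_induct)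
  case const
  then show ?case using assms(1) by simp
next
  case (update f a b)
  have eq: "Poly_Mapping.update a b f = Poly_Mapping.single a b + f"
    using update(1) by (intro poly_mapping_eqI)
      (auto simp: lookup_update lookup_add lookup_single in_keys_iff when_def)
  have "Poly_Mapping.keys (Poly_Mapping.single a b + f) = insert a (Poly_Mapping.keys f)"
    using update(1,2) by (auto simp: in_keys_iff lookup_add lookup_single when_def split: if_splits)
  then show ?case unfolding eq using assms(2) update(1-3) by blast
qed

lemma poly_mapping_add_induct [case_names zero single add]:
  assumes "P 0" "\<And>a b. P (Poly_Mapping.single a b)" "\<And>x y. P x \<Longrightarrow> P y \<Longrightarrow> P (x + y)"
  shows "P f"
  by (induction f rule: poly_mapping_induct) (use assms in auto)

lemma two_sided_ideal_lv_ideal: "two_sided_ideal (lv_ideal :: 'k::ring_1 freealg set)"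
  unfolding lv_ideal_def two_sided_ideal_def by blast

lemma leavitt_relations_subset_lv_ideal: "leavitt_relations \<subseteq> lv_ideal"
  unfolding lv_ideal_def by blast

lemma lv_ideal_subset:
  "two_sided_ideal J \<Longrightarrow> leavitt_relations \<subseteq> J \<Longrightarrow> lv_ideal \<subseteq> J"
  unfolding lv_ideal_def by blast

lemma lv_ideal_0: "0 \<in> lv_ideal"
  and lv_ideal_add: "x \<in> lv_ideal \<Longrightarrow> y \<in> lv_ideal \<Longrightarrow> x + y \<in> lv_ideal"
  and lv_ideal_mult_left: "x \<in> lv_ideal \<Longrightarrow> r * x \<in> lv_ideal"
  and lv_ideal_mult_right: "x \<in> lv_ideal \<Longrightarrow> x * r \<in> lv_ideal"
  using two_sided_ideal_lv_ideal unfolding two_sided_ideal_def by blast+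

lemma lv_ideal_uminus: "(x::'k::ring_1 freealg) \<in> lv_ideal \<Longrightarrow> - x \<in> lv_ideal"
  using lv_ideal_mult_left[of x "-1"] by simp

lemma lv_eq_refl [simp]: "lv_eq x x"
  unfolding lv_eq_def by (simp add: lv_ideal_0)

lemma lv_eq_sym: "lv_eq (x::'k::ring_1 freealg) y \<Longrightarrow> lv_eq y x"
  unfolding lv_eq_def using lv_ideal_uminus by fastforce

lemma lv_eq_trans [trans]: "lv_eq (x::'k::ring_1 freealg) y \<Longrightarrow> lv_eq y z \<Longrightarrow> lv_eq x z"
  unfolding lv_eq_def using lv_ideal_add by fastforce

lemma lv_eq_add:
  assumes "lv_eq (x::'k::ring_1 freealg) x'" "lv_eq y y'"
  shows "lv_eq (x + y) (x' + y')"
proof -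
  have "x + y - (x' + y') = (x - x') + (y - y')" by (simp add: algebra_simps)
  then show ?thesis using assms unfolding lv_eq_def by (metis lv_ideal_add)
qed

lemma lv_eq_diff:
  assumes "lv_eq (x::'k::ring_1 freealg) x'" "lv_eq y y'"
  shows "lv_eq (x - y) (x' - y')"
proof -
  have "x - y - (x' - y') = (x - x') + - (y - y')" by (simp add: algebra_simps)
  then show ?thesis using assms unfolding lv_eq_def by (metis lv_ideal_add lv_ideal_uminus)
qed

lemma lv_eq_mult:
  assumes "lv_eq (x::'k::ring_1 freealg) x'" "lv_eq y y'"
  shows "lv_eq (x * y) (x' * y')"
proof -
  have "x * y - x' * y' = (x - x') * y + x' * (y - y')" by (simp add: algebra_simps)
  then show ?thesis
    using assms unfolding lv_eq_def by (metis lv_ideal_add lv_ideal_mult_left lv_ideal_mult_right)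
qed

lemma lv_eq_mult_left: "lv_eq (y::'k::ring_1 freealg) y' \<Longrightarrow> lv_eq (x * y) (x * y')"
  and lv_eq_mult_right: "lv_eq (x::'k::ring_1 freealg) x' \<Longrightarrow> lv_eq (x * y) (x' * y)"
  by (simp_all add: lv_eq_mult)

lemma lv_eq_sum_list:
  "(\<And>z. z \<in> set xs \<Longrightarrow> lv_eq (f z :: 'k::ring_1 freealg) (g z)) \<Longrightarrow>
    lv_eq (sum_list (map f xs)) (sum_list (map g xs))"
  by (induction xs) (auto intro: lv_eq_add)

definition mon :: "lett list \<Rightarrow> 'k::ring_1 freealg" where
  "mon u = Poly_Mapping.single (Word u) 1"

definition scal :: "'k::ring_1 \<Rightarrow> 'k freealg" where
  "scal c = Poly_Mapping.single 0 c"

lemma mon_append: "(mon (u @ v) :: 'k::ring_1 freealg) = mon u * mon v"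
  unfolding mon_def by (simp add: mult_single)

lemma mon_Nil [simp]: "(mon [] :: 'k::ring_1 freealg) = 1"
  unfolding mon_def zero_word_def[symmetric] by simp

lemma gen_eq_mon: "gen l = mon [l]"
  unfolding gen_def mon_def ..

lemma single_eq_scal_mult_mon:
  "(Poly_Mapping.single (Word u) c :: 'k::ring_1 freealg) = scal c * mon u"
  unfolding scal_def mon_def by (simp add: mult_single zero_word_def)

lemma scal_0 [simp]: "scal 0 = 0"
  and scal_1 [simp]: "scal 1 = 1"
  and scal_add: "scal (a + b) = scal a + scal b"
  and scal_mult: "scal (a * b) = (scal a * scal b :: 'k::ring_1 freealg)"
  unfolding scal_def by (simp_all add: single_add mult_single)

lemma scal_commute: "scal c * x = x * (scal c :: 'k::comm_ring_1 freealg)"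
proof (induction x rule: poly_mapping_add_induct)
  case (single a b)
  then show ?case unfolding scal_def by (simp add: mult_single mult.commute)
qed (simp_all add: algebra_simps)

lemma lv_eq_astar_a: "lv_eq (mon [Las, La] :: 'k::ring_1 freealg) 1"
  and lv_eq_bstar_b: "lv_eq (mon [Lbs, Lb] :: 'k::ring_1 freealg) 1"
  and lv_eq_astar_b: "lv_eq (mon [Las, Lb] :: 'k::ring_1 freealg) 0"
  and lv_eq_bstar_a: "lv_eq (mon [Lbs, La] :: 'k::ring_1 freealg) 0"
  and lv_eq_vertex: "lv_eq (mon [La, Las] + mon [Lb, Lbs] :: 'k::ring_1 freealg) 1"
  using leavitt_relations_subset_lv_ideal
  unfolding lv_eq_def leavitt_relations_def gen_eq_mon by (auto simp: mon_append[symmetric])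

definition real_path :: "lett list \<Rightarrow> bool" where
  "real_path \<pi> \<longleftrightarrow> set \<pi> \<subseteq> {La, Lb}"

lemma real_path_Nil [simp]: "real_path []"
  and real_path_Cons [simp]: "real_path (l # u) \<longleftrightarrow> l \<in> {La, Lb} \<and> real_path u"
  and real_path_append [simp]: "real_path (u @ v) \<longleftrightarrow> real_path u \<and> real_path v"
  unfolding real_path_def by auto

lemma lett_cases:
  obtains "l \<in> {La, Lb}" | g where "g \<in> {La, Lb}" "l = lstar g"
proof (cases l)
  case Las
  then show thesis using that(2)[of La] by simp
next
  case Lbs
  then show thesis using that(2)[of Lb] by simp
qed (use that(1) in auto)

lemma lv_eq_ghost_real:
  assumes "g \<in> {La, Lb}" "c \<in> {La, Lb}"
  shows "lv_eq (mon (u @ [lstar g, c] @ v) :: 'k::ring_1 freealg) (if g = c then mon (u @ v) else 0)"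
proof -
  have "lv_eq (mon [lstar g, c] :: 'k freealg) (if g = c then 1 else 0)"
    using assms lv_eq_astar_a lv_eq_bstar_b lv_eq_astar_b lv_eq_bstar_a by auto
  then have "lv_eq (mon u * mon [lstar g, c] * mon v :: 'k freealg) (mon u * (if g = c then 1 else 0) * mon v)"
    by (intro lv_eq_mult_left lv_eq_mult_right)
  then show ?thesis by (cases "g = c") (simp_all add: mon_append[symmetric])
qed

lemma lstar_lstar [simp]: "lstar (lstar l) = l"
  by (cases l) auto

lemma wstar_wstar [simp]: "wstar (wstar w) = w"
  by (cases w) (simp add: rev_map[symmetric] comp_def)

lemma inj_wstar: "inj wstar"
  by (metis injI wstar_wstar)

lemma wstar_plus: "wstar (u + v) = wstar v + wstar u"
  by (cases u; cases v) simp

lemma wdeg_plus: "wdeg (u + v) = wdeg u + wdeg v"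
  by (cases u; cases v) simp

lemma wdeg_wstar: "wdeg (wstar w) = - wdeg w"
proof (cases w)
  case (Word u)
  have "ldeg (lstar l) = - ldeg l" for l by (cases l) auto
  then show ?thesis using Word by (induction u arbitrary: w) auto
qed

definition mon_star :: "lett list \<Rightarrow> 'k::ring_1 freealg" where
  "mon_star u = mon (rev (map lstar u))"

locale involuted_field =
  fixes \<sigma> :: "'k::field \<Rightarrow> 'k"
  assumes involution: "field_involution \<sigma>"
begin

abbreviation star :: "'k freealg \<Rightarrow> 'k freealg" where
  "star \<equiv> fa_star \<sigma>"

lemma \<sigma>_add: "\<sigma> (x + y) = \<sigma> x + \<sigma> y"
  and \<sigma>_mult: "\<sigma> (x * y) = \<sigma> x * \<sigma> y"
  and \<sigma>_\<sigma> [simp]: "\<sigma> (\<sigma> x) = x"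
  using involution unfolding field_involution_def by blast+

lemma \<sigma>_0 [simp]: "\<sigma> 0 = 0"
proof -
  have "\<sigma> 0 + \<sigma> 0 = \<sigma> 0 + 0" using \<sigma>_add[of 0 0] by simp
  then show ?thesis by (rule add_left_imp_eq)
qed

lemma \<sigma>_1 [simp]: "\<sigma> 1 = 1"
proof -
  have "\<sigma> 1 \<noteq> 0" by (metis \<sigma>_0 \<sigma>_\<sigma> zero_neq_one)
  then show ?thesis using \<sigma>_mult[of 1 1] by (metis mult_cancel_left2)
qed

lemma \<sigma>_inverse: "\<sigma> (inverse x) = inverse (\<sigma> x)"
proof (cases "x = 0")
  case False
  then have "\<sigma> x * \<sigma> (inverse x) = 1" using \<sigma>_mult[of x "inverse x"] by simp
  then show ?thesis by (metis inverse_unique)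
qed simp

lemma \<sigma>_sum: "\<sigma> (sum f S) = (\<Sum>x\<in>S. \<sigma> (f x))"
  by (induction S rule: infinite_finite_induct) (auto simp: \<sigma>_add)

lemma lookup_star: "Poly_Mapping.lookup (star x) w = \<sigma> (Poly_Mapping.lookup x (wstar w))"
  unfolding fa_star_def using inj_wstar by (simp add: Poly_Mapping.map.rep_eq map_key.rep_eq when_def)

lemma star_single: "star (Poly_Mapping.single w c) = Poly_Mapping.single (wstar w) (\<sigma> c)"
proof -
  have "Poly_Mapping.map_key wstar (Poly_Mapping.single w c) = Poly_Mapping.single (wstar w) c"
    using map_key_single[OF inj_wstar, of "wstar w" c] by simp
  then show ?thesis unfolding fa_star_def by simp
qed

lemma star_add: "star (x + y) = star x + star y"
  by (intro poly_mapping_eqI) (simp add: lookup_star lookup_add \<sigma>_add)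

lemma star_0 [simp]: "star 0 = 0"
  using star_add[of 0 0] by simp

lemma star_diff: "star (x - y) = star x - star y"
  by (metis add_diff_cancel_right' diff_add_cancel star_add)

lemma star_mult: "star (x * y) = star y * star x"
proof (induction x rule: poly_mapping_add_induct)
  case (single a b)
  show ?case
    by (induction y rule: poly_mapping_add_induct)
      (simp_all add: mult_single star_single wstar_plus \<sigma>_mult mult.commute algebra_simps star_add)
qed (simp_all add: algebra_simps star_add)

lemma star_star [simp]: "star (star x) = x"
  by (intro poly_mapping_eqI) (simp add: lookup_star)

lemma star_mon: "star (mon u) = mon_star u"
  unfolding mon_def mon_star_def star_single by simp

lemma star_scal: "star (scal c) = scal (\<sigma> c)"
  unfolding scal_def star_single by (simp add: zero_word_def)

lemma star_1 [simp]: "star 1 = 1"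
  using star_scal[of 1] by simp

lemma star_gen: "star (gen l) = gen (lstar l)"
  unfolding gen_eq_mon star_mon mon_star_def by simp

lemma lv_eq_star:
  assumes "lv_eq x y"
  shows "lv_eq (star x) (star y)"
proof -
  let ?J = "{x. star x \<in> lv_ideal}"
  have "two_sided_ideal ?J"
    unfolding two_sided_ideal_def
    by (auto simp: star_add star_mult lv_ideal_0 lv_ideal_add lv_ideal_mult_left lv_ideal_mult_right)
  moreover have "leavitt_relations \<subseteq> ?J"
    using leavitt_relations_subset_lv_ideal unfolding leavitt_relations_def
    by (auto simp: star_add star_mult star_diff star_gen add.commute)
  ultimately have "lv_ideal \<subseteq> ?J" by (rule lv_ideal_subset)
  then show ?thesis using assms unfolding lv_eq_def by (auto simp: star_diff)
qed

end

section \<open>Real paths and the decomposition of the vertex\<close>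

text \<open>Paths grow at their end, so that \<open>\<mu> \<mu>\<^sup>* = \<pi> (l l\<^sup>*) \<pi>\<^sup>*\<close> for \<open>\<mu> = \<pi> l\<close> and the relation
  \<open>a a\<^sup>* + b b\<^sup>* = 1\<close> applies in the middle.\<close>

fun real_paths :: "nat \<Rightarrow> lett list list" where
  "real_paths 0 = [[]]"
| "real_paths (Suc n) = concat (map (\<lambda>\<pi>. [\<pi> @ [La], \<pi> @ [Lb]]) (real_paths n))"

lemma real_paths_real_path: "\<pi> \<in> set (real_paths n) \<Longrightarrow> real_path \<pi> \<and> length \<pi> = n"
  by (induction n arbitrary: \<pi>) auto

definition vertex_expansion :: "nat \<Rightarrow> 'k::ring_1 freealg" where
  "vertex_expansion n = sum_list (map (\<lambda>\<pi>. mon \<pi> * mon_star \<pi>) (real_paths n))"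

lemma lv_eq_vertex_expansion: "lv_eq (vertex_expansion n :: 'k::ring_1 freealg) 1"
proof (induction n)
  case 0
  then show ?case by (simp add: vertex_expansion_def mon_star_def)
next
  case (Suc n)
  have sum_concat: "sum_list (map f (concat (map g xs))) = sum_list (map (\<lambda>x. sum_list (map f (g x))) xs)"
    for f :: "lett list \<Rightarrow> 'k freealg" and g xs
    by (induction xs) auto
  have "(vertex_expansion (Suc n) :: 'k freealg) =
      sum_list (map (\<lambda>\<pi>. mon \<pi> * (mon [La, Las] + mon [Lb, Lbs]) * mon_star \<pi>) (real_paths n))"
    unfolding vertex_expansion_def real_paths.simps sum_concat
    by (intro arg_cong[where f=sum_list] map_cong refl)
      (simp add: mon_star_def mon_append[symmetric] algebra_simps)
  also have "lv_eq \<dots> (sum_list (map (\<lambda>\<pi>. mon \<pi> * 1 * mon_star \<pi>) (real_paths n)))"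
    by (intro lv_eq_sum_list lv_eq_mult_right lv_eq_mult_left lv_eq_vertex)
  also have "\<dots> = vertex_expansion n"
    by (simp add: vertex_expansion_def)
  also have "lv_eq \<dots> 1"
    by (rule Suc)
  finally show ?case .
qed

lemma lv_eq_fixed_by_path_multiples:
  fixes P y :: "'k::ring_1 freealg"
  assumes "\<forall>\<pi>\<in>set (real_paths n). lv_eq (P * (y * mon \<pi>)) (y * mon \<pi>)"
  shows "lv_eq (P * y) y"
proof -
  have y: "lv_eq (y * vertex_expansion n) y"
    using lv_eq_mult_left[OF lv_eq_vertex_expansion, of y n] by simp
  have "lv_eq (P * y) (P * (y * vertex_expansion n))"
    by (intro lv_eq_mult_left lv_eq_sym[OF y])
  also have "P * (y * vertex_expansion n) =
      sum_list (map (\<lambda>\<pi>. P * (y * mon \<pi>) * mon_star \<pi>) (real_paths n))"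
    unfolding vertex_expansion_def by (simp add: sum_list_const_mult[symmetric] mult.assoc)
  also have "lv_eq \<dots> (sum_list (map (\<lambda>\<pi>. y * mon \<pi> * mon_star \<pi>) (real_paths n)))"
    using assms by (intro lv_eq_sum_list lv_eq_mult_right) auto
  also have "\<dots> = y * vertex_expansion n"
    unfolding vertex_expansion_def by (simp add: sum_list_const_mult[symmetric] mult.assoc)
  also have "lv_eq \<dots> y"
    by (rule y)
  finally show ?thesis .
qed

definition path_vector :: "nat \<Rightarrow> 'k::ring_1 freealg \<Rightarrow> bool" where
  "path_vector m v \<longleftrightarrow>
    (\<forall>w\<in>Poly_Mapping.keys v. \<exists>\<pi>. w = Word \<pi> \<and> real_path \<pi> \<and> length \<pi> = m)"

lemma path_vector_subset:
  "path_vector m u \<Longrightarrow> path_vector m u' \<Longrightarrow>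
    Poly_Mapping.keys v \<subseteq> Poly_Mapping.keys u \<union> Poly_Mapping.keys u' \<Longrightarrow> path_vector m v"
  unfolding path_vector_def by blast

lemma path_vector_0 [simp]: "path_vector m 0"
  unfolding path_vector_def by simp

lemma path_vector_add: "path_vector m u \<Longrightarrow> path_vector m v \<Longrightarrow> path_vector m (u + v)"
  by (rule path_vector_subset[OF _ _ keys_add])

lemma path_vector_diff: "path_vector m u \<Longrightarrow> path_vector m v \<Longrightarrow> path_vector m (u - v)"
  by (rule path_vector_subset[OF _ _ keys_diff])

lemma path_vector_scal: "path_vector m v \<Longrightarrow> path_vector m (scal c * v)"
  using keys_mult[of "scal c" v] unfolding path_vector_def scal_def by (auto split: if_splits)

lemma path_vector_single:
  "real_path \<pi> \<Longrightarrow> length \<pi> = m \<Longrightarrow> path_vector m (Poly_Mapping.single (Word \<pi>) c)"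
  unfolding path_vector_def by simp

lemma path_vector_single_add:
  assumes "path_vector m (Poly_Mapping.single a b + f)"
    and "Poly_Mapping.keys (Poly_Mapping.single a b + f) = insert a (Poly_Mapping.keys f)"
  obtains \<pi> where "a = Word \<pi>" "real_path \<pi>" "length \<pi> = m" "path_vector m f"
  using assms unfolding path_vector_def by auto

fun ghosts :: "word \<Rightarrow> nat" where
  "ghosts (Word u) = length (filter (\<lambda>l. l \<notin> {La, Lb}) u)"

lemma mon_append_real_path_reduces:
  assumes "real_path \<pi>" "ghosts (Word w) \<le> length \<pi>" "int (length \<pi>) + wdeg (Word w) = int m"
  shows "\<exists>v. path_vector m v \<and> lv_eq (mon (w @ \<pi>) :: 'k::ring_1 freealg) v"
  using assms
proof (induction w arbitrary: \<pi> rule: rev_induct)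
  case Nil
  then show ?case by (intro exI[of _ "mon \<pi>"]) (auto simp: mon_def intro: path_vector_single)
next
  case (snoc l w)
  from lett_cases[of l] show ?case
  proof cases
    case 1
    then show ?thesis using snoc.IH[of "l # \<pi>"] snoc.prems by auto
  next
    case (2 g)
    have ghost_l: "lstar g \<notin> {La, Lb}" "ldeg (lstar g) = -1" using 2 by auto
    then obtain c \<rho> where \<pi>: "\<pi> = c # \<rho>" using snoc.prems 2 by (cases \<pi>) auto
    then have c: "c \<in> {La, Lb}" "real_path \<rho>" using snoc.prems by auto
    have red: "lv_eq (mon ((w @ [l]) @ \<pi>) :: 'k freealg) (if g = c then mon (w @ \<rho>) else 0)"
      using lv_eq_ghost_real[OF 2(1) c(1), of w \<rho>] 2 \<pi> by simp
    show ?thesis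
    proof (cases "g = c")
      case True
      then obtain v where "path_vector m v" "lv_eq (mon (w @ \<rho>) :: 'k freealg) v"
        using snoc.IH[OF c(2)] snoc.prems \<pi> 2 ghost_l by auto
      then show ?thesis using lv_eq_trans[OF red[unfolded if_P[OF True]]] by blast
    qed (use red in \<open>auto intro!: exI[of _ 0]\<close>)
  qed
qed

definition homog :: "int \<Rightarrow> 'k::ring_1 freealg \<Rightarrow> bool" where
  "homog d x \<longleftrightarrow> (\<forall>w\<in>Poly_Mapping.keys x. wdeg w = d)"

lemma homog_0 [simp]: "homog d 0"
  unfolding homog_def by simp

lemma homog_add: "homog d x \<Longrightarrow> homog d y \<Longrightarrow> homog d (x + y)"
  unfolding homog_def using keys_add by (meson UnE subsetD)

lemma homog_mult:
  assumes "homog d x" "homog e y"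
  shows "homog (d + e) (x * y)"
  unfolding homog_def
proof
  fix w assume "w \<in> Poly_Mapping.keys (x * y)"
  then obtain u v where "w = u + v" "u \<in> Poly_Mapping.keys x" "v \<in> Poly_Mapping.keys y"
    using keys_mult by blast
  then show "wdeg w = d + e" using assms unfolding homog_def by (simp add: wdeg_plus)
qed

lemma homog_scal: "homog 0 (scal c)"
  unfolding homog_def scal_def by (simp add: zero_word_def)

lemma homog_path_vector: "path_vector m v \<Longrightarrow> homog (int m) v"
proof -
  have "real_path \<pi> \<Longrightarrow> wdeg (Word \<pi>) = int (length \<pi>)" for \<pi>
    by (induction \<pi>) auto
  then show "path_vector m v \<Longrightarrow> homog (int m) v"
    unfolding path_vector_def homog_def by fastforce
qed

lemma (in involuted_field) homog_star:
  assumes "homog d x"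
  shows "homog (- d) (star x)"
  unfolding homog_def
proof
  fix w assume "w \<in> Poly_Mapping.keys (star x)"
  then have "wstar w \<in> Poly_Mapping.keys x" by (auto simp: in_keys_iff lookup_star)
  then show "wdeg w = - d" using assms unfolding homog_def by (metis wdeg_wstar minus_minus)
qed

lemma homog_mult_real_path_reduces:
  assumes "homog d y" "\<forall>w\<in>Poly_Mapping.keys y. ghosts w \<le> n"
    and "real_path \<nu>" "length \<nu> = n" "int n + d = int m"
  shows "\<exists>v. path_vector m v \<and> lv_eq (y * mon \<nu> :: 'k::ring_1 freealg) v"
  using assms(1,2)
proof (induction y rule: poly_mapping_induct)
  case zero
  show ?case by (intro exI[of _ 0]) simp
next
  case (single_add a b f)
  obtain vf where vf: "path_vector m vf" "lv_eq (f * mon \<nu>) vf"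
    using single_add.IH single_add.prems single_add.hyps(3) unfolding homog_def by auto
  obtain u where a: "a = Word u" by (cases a)
  have "ghosts (Word u) \<le> length \<nu>" "int (length \<nu>) + wdeg (Word u) = int m"
    using single_add.prems single_add.hyps(3) assms(4,5) a unfolding homog_def by auto
  then obtain va where va: "path_vector m va" "lv_eq (mon (u @ \<nu>) :: 'k freealg) va"
    using mon_append_real_path_reduces[OF assms(3)] by blast
  have "(Poly_Mapping.single a b + f) * mon \<nu> = scal b * mon (u @ \<nu>) + f * mon \<nu>"
    unfolding a single_eq_scal_mult_mon by (simp add: mon_append mult.assoc distrib_right)
  also have "lv_eq \<dots> (scal b * va + vf)"
    by (intro lv_eq_add lv_eq_mult_left va(2) vf(2))
  finally show ?case using va vf by (blast intro: path_vector_add path_vector_scal)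
qed

lemma lv_eq_mon_star_mult_mon:
  assumes "real_path \<pi>" "real_path \<pi>'" "length \<pi> = length \<pi>'"
  shows "lv_eq (mon_star \<pi> * mon \<pi>' :: 'k::ring_1 freealg) (if \<pi> = \<pi>' then 1 else 0)"
  using assms
proof (induction \<pi> arbitrary: \<pi>')
  case Nil
  then show ?case by (simp add: mon_star_def)
next
  case (Cons l \<rho>)
  obtain l' \<rho>' where \<pi>': "\<pi>' = l' # \<rho>'" using Cons.prems by (cases \<pi>') auto
  have l: "l \<in> {La, Lb}" "l' \<in> {La, Lb}" "real_path \<rho>" "real_path \<rho>'" "length \<rho> = length \<rho>'"
    using Cons.prems \<pi>' by auto
  have "(mon_star (l # \<rho>) * mon \<pi>' :: 'k freealg) = mon (rev (map lstar \<rho>) @ [lstar l, l'] @ \<rho>')"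
    unfolding \<pi>' mon_star_def by (simp add: mon_append[symmetric])
  also have "lv_eq \<dots> (if l = l' then mon (rev (map lstar \<rho>) @ \<rho>') else 0)"
    by (rule lv_eq_ghost_real) (use l in auto)
  also have "\<dots> = (if l = l' then mon_star \<rho> * mon \<rho>' else 0)"
    by (simp add: mon_star_def mon_append)
  also have "lv_eq \<dots> (if l = l' then (if \<rho> = \<rho>' then 1 else 0) else 0)"
    using Cons.IH[OF l(3-5)] by auto
  also have "\<dots> = (if l # \<rho> = \<pi>' then 1 else 0)"
    using \<pi>' by auto
  finally show ?case .
qed

lemma lv_eq_mon_star_mult_path_vector:
  assumes "path_vector m v" "real_path \<pi>" "length \<pi> = m"
  shows "lv_eq (mon_star \<pi> * v :: 'k::comm_ring_1 freealg) (scal (Poly_Mapping.lookup v (Word \<pi>)))"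
  using assms(1)
proof (induction v rule: poly_mapping_induct)
  case (single_add a b f)
  obtain \<pi>' where a: "a = Word \<pi>'" "real_path \<pi>'" "length \<pi>' = m" and f: "path_vector m f"
    using path_vector_single_add[OF single_add.prems single_add.hyps(3)] by blast
  have "mon_star \<pi> * (Poly_Mapping.single a b + f) = scal b * (mon_star \<pi> * mon \<pi>') + mon_star \<pi> * f"
    unfolding a single_eq_scal_mult_mon by (simp add: distrib_left) (metis mult.assoc scal_commute)
  also have "lv_eq \<dots> (scal b * (if \<pi> = \<pi>' then 1 else 0) + scal (Poly_Mapping.lookup f (Word \<pi>)))"
    using a assms(2,3) by (intro lv_eq_add lv_eq_mult_left lv_eq_mon_star_mult_mon single_add.IH f) auto
  also have "\<dots> = scal (Poly_Mapping.lookup (Poly_Mapping.single a b + f) (Word \<pi>))"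
    unfolding a by (simp add: lookup_add lookup_single when_def scal_add)
  finally show ?case .
qed simp

context involuted_field
begin

definition path_inner :: "'k freealg \<Rightarrow> 'k freealg \<Rightarrow> 'k" where
  "path_inner u v = (\<Sum>\<mu>\<in>Poly_Mapping.keys u. \<sigma> (Poly_Mapping.lookup u \<mu>) * Poly_Mapping.lookup v \<mu>)"

lemma lv_eq_star_mult_path_vector:
  assumes "path_vector m u" "path_vector m v"
  shows "lv_eq (star u * v) (scal (path_inner u v))"
  using assms(1)
proof (induction u rule: poly_mapping_induct)
  case zero
  then show ?case by (simp add: path_inner_def)
next
  case (single_add a b f)
  obtain \<pi> where a: "a = Word \<pi>" "real_path \<pi>" "length \<pi> = m" and f: "path_vector m f"
    using path_vector_single_add[OF single_add.prems single_add.hyps(3)] by blast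
  have "star (Poly_Mapping.single a b + f) * v = scal (\<sigma> b) * (mon_star \<pi> * v) + star f * v"
    unfolding star_add star_single a
    by (simp add: single_eq_scal_mult_mon mon_star_def algebra_simps)
  also have "lv_eq \<dots> (scal (\<sigma> b) * scal (Poly_Mapping.lookup v a) + scal (path_inner f v))"
    using lv_eq_mon_star_mult_path_vector[OF assms(2) a(2,3)] a
    by (intro lv_eq_add lv_eq_mult_left single_add.IH f) auto
  also have "\<dots> = scal (path_inner (Poly_Mapping.single a b + f) v)"
  proof -
    have "path_inner (Poly_Mapping.single a b + f) v = \<sigma> b * Poly_Mapping.lookup v a + path_inner f v"
      unfolding path_inner_def single_add.hyps(3) using single_add.hyps(1)
      by (subst sum.insert) (auto simp: lookup_add lookup_single when_def in_keys_iff intro!: sum.cong)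
    then show ?thesis by (simp add: scal_mult scal_add)
  qed
  finally show ?case .
qed

lemma \<sigma>_path_inner_self: "\<sigma> (path_inner v v) = path_inner v v"
  unfolding path_inner_def \<sigma>_sum by (simp add: \<sigma>_mult mult.commute)

end

locale positive_definite_field = involuted_field \<sigma> for \<sigma> :: "'k::field \<Rightarrow> 'k" +
  assumes positive_definite: "positive_definite \<sigma>"
begin

lemma path_inner_self_eq_0: "path_inner v v = 0 \<Longrightarrow> v = 0"
proof -
  assume z: "path_inner v v = 0"
  let ?K = "Poly_Mapping.keys v"
  obtain h where h: "bij_betw h {..<card ?K} ?K"
    using ex_bij_betw_nat_finite[of ?K] lessThan_atLeast0 by auto
  define k where "k i = Poly_Mapping.lookup v (h i)" for i
  have "(\<Sum>i<card ?K. k i * \<sigma> (k i)) = path_inner v v"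
    unfolding path_inner_def k_def
    using sum.reindex_bij_betw[OF h, of "\<lambda>\<mu>. Poly_Mapping.lookup v \<mu> * \<sigma> (Poly_Mapping.lookup v \<mu>)"]
    by (simp add: mult.commute)
  then have "\<forall>i<card ?K. k i = 0"
    using positive_definite z unfolding positive_definite_def by auto
  moreover have "\<mu> \<in> ?K \<Longrightarrow> \<exists>i<card ?K. \<mu> = h i" for \<mu>
    using h unfolding bij_betw_def by auto
  ultimately have "?K = {}"
    unfolding k_def by (metis equals0I in_keys_iff)
  then show "v = 0" by simp
qed

section \<open>Gram--Schmidt\<close>

definition path_projection :: "nat \<Rightarrow> 'k freealg \<Rightarrow> bool" where
  "path_projection m P \<longleftrightarrow> homog 0 P \<and> lv_eq (star P) P \<and> lv_eq (P * P) P \<and>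
     (\<forall>v. path_vector m v \<longrightarrow> (\<exists>v'. path_vector m v' \<and> lv_eq (P * v) v'))"

lemma path_projection_0: "path_projection m 0"
  unfolding path_projection_def by (auto intro: exI[of _ 0])

lemma path_projection_rank_one:
  assumes w: "path_vector m w" "w \<noteq> 0"
  defines "Q \<equiv> w * scal (inverse (path_inner w w)) * star w"
  shows "path_projection m Q" and "lv_eq (Q * w) w"
proof -
  define s where "s = path_inner w w"
  define c where "c = inverse s"
  have "s \<noteq> 0" unfolding s_def using w path_inner_self_eq_0 by blast
  then have cs: "c * s = 1" unfolding c_def by simp
  have Qv: "lv_eq (Q * v) (scal (c * path_inner w v) * w)" if "path_vector m v" for v
  proof -
    have "Q * v = w * scal c * (star w * v)" unfolding Q_def c_def s_def by (simp add: mult.assoc)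
    also have "lv_eq \<dots> (w * scal c * scal (path_inner w v))"
      by (rule lv_eq_mult_left[OF lv_eq_star_mult_path_vector[OF w(1) that]])
    also have "\<dots> = w * scal (c * path_inner w v)"
      by (simp add: scal_mult mult.assoc)
    also have "\<dots> = scal (c * path_inner w v) * w"
      by (rule scal_commute[symmetric])
    finally show ?thesis .
  qed
  show "lv_eq (Q * w) w"
    using Qv[OF w(1)] cs unfolding s_def by simp
  have "homog (int m + 0 + - int m) Q"
    unfolding Q_def by (intro homog_mult homog_star homog_path_vector homog_scal w)
  moreover have "star Q = Q"
    unfolding Q_def c_def s_def
    by (simp add: star_mult star_scal \<sigma>_inverse \<sigma>_path_inner_self mult.assoc)
  moreover have "lv_eq (Q * Q) Q"
  proof -
    have "Q * Q = (w * scal c) * (star w * w) * (scal c * star w)"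
      unfolding Q_def c_def s_def by (simp add: mult.assoc)
    also have "lv_eq \<dots> ((w * scal c) * scal s * (scal c * star w))"
      unfolding s_def
      by (rule lv_eq_mult_right, rule lv_eq_mult_left, rule lv_eq_star_mult_path_vector[OF w(1) w(1)])
    also have "\<dots> = w * scal (c * s * c) * star w"
      by (simp add: scal_mult mult.assoc)
    also have "\<dots> = Q"
      unfolding Q_def c_def[symmetric] s_def[symmetric] cs by simp
    finally show ?thesis .
  qed
  moreover have "\<exists>v'. path_vector m v' \<and> lv_eq (Q * v) v'" if "path_vector m v" for v
    using Qv[OF that] w(1) path_vector_scal by blast
  ultimately show "path_projection m Q"
    unfolding path_projection_def by simp
qed

lemma path_projection_orthogonal_add:
  assumes P: "path_projection m P" and Q: "path_projection m Q" and PQ: "lv_eq (P * Q) 0"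
  shows "path_projection m (P + Q)" and "lv_eq (Q * P) 0" and "lv_eq ((P + Q) * P) P"
proof -
  have hP: "homog 0 P" and sP: "lv_eq (star P) P" and PP: "lv_eq (P * P) P"
    and vP: "\<forall>v. path_vector m v \<longrightarrow> (\<exists>v'. path_vector m v' \<and> lv_eq (P * v) v')"
    using P unfolding path_projection_def by blast+
  have hQ: "homog 0 Q" and sQ: "lv_eq (star Q) Q" and QQ: "lv_eq (Q * Q) Q"
    and vQ: "\<forall>v. path_vector m v \<longrightarrow> (\<exists>v'. path_vector m v' \<and> lv_eq (Q * v) v')"
    using Q unfolding path_projection_def by blast+
  have "lv_eq (Q * P) (star Q * star P)"
    by (rule lv_eq_mult[OF lv_eq_sym[OF sQ] lv_eq_sym[OF sP]])
  also have "\<dots> = star (P * Q)" by (simp add: star_mult)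
  also have "lv_eq \<dots> 0" using lv_eq_star[OF PQ] by simp
  finally show QP: "lv_eq (Q * P) 0" .
  have "(P + Q) * P = P * P + Q * P" by (simp add: algebra_simps)
  also have "lv_eq \<dots> (P + 0)" by (rule lv_eq_add[OF PP QP])
  finally show "lv_eq ((P + Q) * P) P" by simp
  have "(P + Q) * (P + Q) = P * P + (P * Q + (Q * P + Q * Q))" by (simp add: algebra_simps)
  also have "lv_eq \<dots> (P + (0 + (0 + Q)))"
    by (rule lv_eq_add[OF PP lv_eq_add[OF PQ lv_eq_add[OF QP QQ]]])
  finally have "lv_eq ((P + Q) * (P + Q)) (P + Q)" by simp
  moreover have "\<exists>v'. path_vector m v' \<and> lv_eq ((P + Q) * v) v'" if v: "path_vector m v" for v
  proof -
    obtain v1 v2 where "path_vector m v1" "lv_eq (P * v) v1" "path_vector m v2" "lv_eq (Q * v) v2"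
      using vP vQ v by blast
    then have "path_vector m (v1 + v2)" "lv_eq ((P + Q) * v) (v1 + v2)"
      by (simp_all add: path_vector_add lv_eq_add distrib_right)
    then show ?thesis by blast
  qed
  ultimately show "path_projection m (P + Q)"
    unfolding path_projection_def star_add
    using homog_add[OF hP hQ] lv_eq_add[OF sP sQ] by blast
qed

lemma path_projection_residual:
  assumes P: "path_projection m P" and v: "path_vector m v"
  obtains v' where "path_vector m v'" "lv_eq (P * v) v'" "lv_eq (P * (v - v')) 0"
proof -
  have PP: "lv_eq (P * P) P"
    using P unfolding path_projection_def by blast
  obtain v' where v': "path_vector m v'" "lv_eq (P * v) v'"
    using P v unfolding path_projection_def by blast
  have "lv_eq (P * v') ((P * P) * v)"
    using lv_eq_mult_left[OF lv_eq_sym[OF v'(2)], of P] by (simp add: mult.assoc)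
  also have "lv_eq \<dots> (P * v)" by (rule lv_eq_mult_right[OF PP])
  also have "lv_eq \<dots> v'" by (rule v'(2))
  finally have "lv_eq (P * (v - v')) (v' - v')"
    unfolding right_diff_distrib by (rule lv_eq_diff[OF v'(2)])
  then show thesis using that v' by simp
qed

text \<open>One Gram--Schmidt step: the residual \<open>w = v\<^sub>0 - P v\<^sub>0\<close> is orthogonal to the range of \<open>P\<close>,
  and adding the rank-one projection onto \<open>w\<close> absorbs \<open>v\<^sub>0\<close>.\<close>

lemma gram_schmidt_step:
  assumes P: "path_projection m P" "lv_eq P (x * t)"
    and v0: "path_vector m v0" "lv_eq (x * z) v0"
  obtains P' t' where "path_projection m P'" "lv_eq P' (x * t')"
    "lv_eq (P' * P) P" "lv_eq (P' * v0) v0"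
proof -
  obtain v' where v': "path_vector m v'" "lv_eq (P * v0) v'" and Pw: "lv_eq (P * (v0 - v')) 0"
    using path_projection_residual[OF P(1) v0(1)] .
  define w where "w = v0 - v'"
  have "lv_eq v' (P * v0)" by (rule lv_eq_sym[OF v'(2)])
  also have "lv_eq \<dots> ((x * t) * v0)" by (rule lv_eq_mult_right[OF P(2)])
  also have "lv_eq \<dots> ((x * t) * (x * z))" by (rule lv_eq_mult_left[OF lv_eq_sym[OF v0(2)]])
  finally have "lv_eq w (x * z - (x * t) * (x * z))"
    unfolding w_def by (rule lv_eq_diff[OF lv_eq_sym[OF v0(2)]])
  then have wx: "lv_eq w (x * (z - t * (x * z)))"
    by (simp add: algebra_simps)
  show thesis
  proof (cases "w = 0")
    case True
    then show thesis
      using that[OF P] P(1) v'(2) unfolding path_projection_def by (simp add: w_def)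
  next
    case False
    define Q where "Q = w * scal (inverse (path_inner w w)) * star w"
    have Q: "path_projection m Q" "lv_eq (Q * w) w"
      using path_projection_rank_one[OF _ False] path_vector_diff[OF v0(1) v'(1)]
      unfolding Q_def w_def by blast+
    have "lv_eq (P * Q) 0"
      unfolding Q_def w_def using lv_eq_mult_right[OF Pw] by (simp add: mult.assoc)
    note PQ = path_projection_orthogonal_add[OF P(1) Q(1) this]
    have "lv_eq (Q * v') (Q * (P * v0))" by (rule lv_eq_mult_left[OF lv_eq_sym[OF v'(2)]])
    also have "lv_eq \<dots> 0" using lv_eq_mult_right[OF PQ(2), of v0] by (simp add: mult.assoc)
    finally have "lv_eq (P * v0 + Q * v' + Q * w) (v' + 0 + w)"
      using v'(2) Q(2) by (intro lv_eq_add)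
    then have v0_fixed: "lv_eq ((P + Q) * v0) v0"
      by (simp add: w_def algebra_simps)
    have "lv_eq (P + Q) (x * (t + (z - t * (x * z)) * (scal (inverse (path_inner w w)) * star w)))"
      unfolding Q_def using lv_eq_add[OF P(2) lv_eq_mult_right[OF wx]]
      by (simp add: distrib_left mult.assoc)
    from that[OF PQ(1) this PQ(3) v0_fixed] show thesis .
  qed
qed

lemma gram_schmidt:
  assumes "\<forall>z\<in>set zs. \<exists>v. path_vector m v \<and> lv_eq (x * z) v"
  shows "\<exists>P t. path_projection m P \<and> lv_eq P (x * t) \<and> (\<forall>z\<in>set zs. lv_eq (P * (x * z)) (x * z))"
  using assms
proof (induction zs)
  case Nil
  show ?case by (rule exI[of _ 0], rule exI[of _ 0]) (simp add: path_projection_0)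
next
  case (Cons z zs)
  have "\<forall>z'\<in>set zs. \<exists>v. path_vector m v \<and> lv_eq (x * z') v"
    using Cons.prems by simp
  then obtain P t where P: "path_projection m P" "lv_eq P (x * t)"
    and fix_zs: "\<forall>z'\<in>set zs. lv_eq (P * (x * z')) (x * z')"
    using Cons.IH by blast
  obtain v0 where v0: "path_vector m v0" "lv_eq (x * z) v0"
    using Cons.prems by auto
  obtain P' t' where P': "path_projection m P'" "lv_eq P' (x * t')"
    "lv_eq (P' * P) P" "lv_eq (P' * v0) v0"
    using gram_schmidt_step[OF P v0] .
  have "lv_eq (P' * (x * z')) (x * z')" if "z' \<in> set zs" for z'
  proof -
    have fix_z': "lv_eq (x * z') (P * (x * z'))" using lv_eq_sym[OF bspec[OF fix_zs that]] .
    have "lv_eq (P' * (x * z')) ((P' * P) * (x * z'))"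
      using lv_eq_mult_left[OF fix_z'] by (simp add: mult.assoc)
    also have "lv_eq \<dots> (P * (x * z'))" by (rule lv_eq_mult_right[OF P'(3)])
    finally show ?thesis using lv_eq_sym[OF fix_z'] by (rule lv_eq_trans)
  qed
  moreover have "lv_eq (P' * (x * z)) (x * z)"
    using lv_eq_trans[OF lv_eq_trans[OF lv_eq_mult_left[OF v0(2)] P'(4)] lv_eq_sym[OF v0(2)]] .
  ultimately show ?case using P'(1,2) by (metis set_ConsD)
qed

lemma ghosts_bounded:
  obtains n where "N \<le> n" "\<forall>w\<in>Poly_Mapping.keys (y :: 'k freealg). ghosts w \<le> n"
proof
  show "N \<le> N + sum ghosts (Poly_Mapping.keys y)" by simp
  show "\<forall>w\<in>Poly_Mapping.keys y. ghosts w \<le> N + sum ghosts (Poly_Mapping.keys y)"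
  proof
    fix w assume "w \<in> Poly_Mapping.keys y"
    then have "ghosts w \<le> sum ghosts (Poly_Mapping.keys y)" by (intro member_le_sum) auto
    then show "ghosts w \<le> N + sum ghosts (Poly_Mapping.keys y)" by simp
  qed
qed

theorem graded_star_regular: "lv_graded_star_regular \<sigma>"
  unfolding lv_graded_star_regular_def
proof (intro allI impI)
  fix x :: "'k freealg"
  assume "lv_homog x"
  then obtain y d where xy: "lv_eq x y" and y: "homog d y"
    unfolding lv_homog_def homog_def by blast
  obtain n where n: "nat \<bar>d\<bar> \<le> n" "\<forall>w\<in>Poly_Mapping.keys y. ghosts w \<le> n"
    by (rule ghosts_bounded)
  define m where "m = nat (int n + d)"
  have m: "int n + d = int m" unfolding m_def using n(1) by simp
  have "\<forall>z\<in>set (map mon (real_paths n)). \<exists>v. path_vector m v \<and> lv_eq (y * z) v"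
    using homog_mult_real_path_reduces[OF y n(2) _ _ m] real_paths_real_path by auto
  then obtain P t where P: "path_projection m P" "lv_eq P (y * t)"
    and "\<forall>z\<in>set (map mon (real_paths n)). lv_eq (P * (y * z)) (y * z)"
    using gram_schmidt by blast
  then have fixed: "\<forall>\<pi>\<in>set (real_paths n). lv_eq (P * (y * mon \<pi>)) (y * mon \<pi>)"
    by simp
  have "lv_eq x (P * y)"
    using xy lv_eq_sym[OF lv_eq_fixed_by_path_multiples[OF fixed]] by (rule lv_eq_trans)
  moreover have "lv_eq P (x * t)"
    using P(2) lv_eq_mult_right[OF lv_eq_sym[OF xy]] by (rule lv_eq_trans)
  moreover have "lv_homog P"
    using P(1) lv_eq_refl[of P] unfolding path_projection_def lv_homog_def homog_def by blast
  ultimately show "\<exists>p. lv_homog p \<and> lv_eq (p * p) p \<and> lv_eq (star p) p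
      \<and> (\<exists>y. lv_eq x (p * y)) \<and> (\<exists>z. lv_eq p (x * z))"
    using P(1) unfolding path_projection_def by blast
qed

end

section \<open>A representation in which \<open>a a\<^sup>* \<noteq> 1\<close>\<close>

fun letter_op :: "lett \<Rightarrow> ((nat \<Rightarrow> bool) \<Rightarrow> 'k::comm_ring_1) \<Rightarrow> (nat \<Rightarrow> bool) \<Rightarrow> 'k" where
  "letter_op La f s = (if s 0 then f (\<lambda>i. s (Suc i)) else 0)"
| "letter_op Lb f s = (if s 0 then 0 else f (\<lambda>i. s (Suc i)))"
| "letter_op Las f s = f (case_nat True s)"
| "letter_op Lbs f s = f (case_nat False s)"

fun word_op :: "word \<Rightarrow> ((nat \<Rightarrow> bool) \<Rightarrow> 'k::comm_ring_1) \<Rightarrow> (nat \<Rightarrow> bool) \<Rightarrow> 'k" where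
  "word_op (Word u) = List.foldr letter_op u"

lemma letter_op_linear:
  "letter_op l (\<lambda>s. c * f s + d * g s) = (\<lambda>s. c * letter_op l f s + d * letter_op l g s)"
  by (cases l) (auto simp: fun_eq_iff)

lemma word_op_linear:
  "word_op w (\<lambda>s. c * f s + d * g s) = (\<lambda>s. c * word_op w f s + d * word_op w g s)"
proof (cases w)
  case (Word u)
  then show ?thesis by (induction u arbitrary: w) (simp_all add: letter_op_linear)
qed

lemma word_op_scale: "word_op w (\<lambda>s. c * f s) = (\<lambda>s. c * word_op w f s)"
  using word_op_linear[of w c f 0 f] by simp

lemma word_op_add: "word_op w (\<lambda>s. f s + g s) = (\<lambda>s. word_op w f s + word_op w g s)"
  using word_op_linear[of w 1 f 1 g] by simp

lemma word_op_zero: "word_op w (\<lambda>s. 0) = (\<lambda>s. 0)"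
  using word_op_scale[of w 0 "\<lambda>s. 0"] by simp

lemma word_op_plus: "word_op (u + v) f = word_op u (word_op v f)"
  by (cases u; cases v) simp

definition rep :: "'k::comm_ring_1 freealg \<Rightarrow> ((nat \<Rightarrow> bool) \<Rightarrow> 'k) \<Rightarrow> (nat \<Rightarrow> bool) \<Rightarrow> 'k" where
  "rep x f s = (\<Sum>w\<in>Poly_Mapping.keys x. Poly_Mapping.lookup x w * word_op w f s)"

lemma rep_superset:
  "finite S \<Longrightarrow> Poly_Mapping.keys x \<subseteq> S \<Longrightarrow>
    rep x f s = (\<Sum>w\<in>S. Poly_Mapping.lookup x w * word_op w f s)"
  unfolding rep_def by (rule sum.mono_neutral_left) (auto simp: in_keys_iff)

lemma rep_add: "rep (x + y) f s = rep x f s + rep y f s"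
proof -
  let ?S = "Poly_Mapping.keys x \<union> Poly_Mapping.keys y"
  have "rep (x + y) f s = (\<Sum>w\<in>?S. Poly_Mapping.lookup (x + y) w * word_op w f s)"
    by (rule rep_superset) (use keys_add[of x y] in auto)
  also have "\<dots> = (\<Sum>w\<in>?S. Poly_Mapping.lookup x w * word_op w f s)
      + (\<Sum>w\<in>?S. Poly_Mapping.lookup y w * word_op w f s)"
    by (simp add: lookup_add distrib_right sum.distrib)
  also have "\<dots> = rep x f s + rep y f s"
    using rep_superset[of ?S x f s] rep_superset[of ?S y f s] by simp
  finally show ?thesis .
qed

lemma rep_diff: "rep (x - y) f s = rep x f s - rep y f s"
  using rep_add[of "x - y" y f s] by simp

lemma rep_single: "rep (Poly_Mapping.single w c) f s = c * word_op w f s"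
  unfolding rep_def by auto

lemma rep_0 [simp]: "rep 0 f s = 0"
  unfolding rep_def by simp

lemma rep_mon: "rep (mon u) f s = word_op (Word u) f s"
  unfolding mon_def by (simp add: rep_single)

lemma rep_1: "rep 1 f s = f s"
  using rep_mon[of "[]" f s] by simp

lemma rep_zero_fun: "rep x (\<lambda>s. 0) = (\<lambda>s. 0)"
  by (simp add: rep_def word_op_zero fun_eq_iff)

lemma rep_mult: "rep (x * y) f s = rep x (rep y f) s"
proof (induction x arbitrary: s rule: poly_mapping_add_induct)
  case (single a b)
  show ?case
  proof (induction y arbitrary: s rule: poly_mapping_add_induct)
    case zero
    have "rep 0 f = (\<lambda>s. 0)" by (simp add: fun_eq_iff)
    then show ?case by (simp add: rep_zero_fun)
  next
    case (single a' b')
    have "rep (Poly_Mapping.single a' b') f = (\<lambda>s. b' * word_op a' f s)"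
      by (simp add: rep_single fun_eq_iff)
    then show ?case
      by (simp add: mult_single rep_single word_op_plus word_op_scale)
  next
    case (add y1 y2)
    have "rep (y1 + y2) f = (\<lambda>s. rep y1 f s + rep y2 f s)"
      by (simp add: rep_add fun_eq_iff)
    then show ?case
      using add by (simp add: distrib_left rep_add rep_single word_op_add)
  qed
qed (simp_all add: distrib_right rep_add)

lemma lv_ideal_subset_rep_kernel: "lv_ideal \<subseteq> {x :: 'k::comm_ring_1 freealg. \<forall>f s. rep x f s = 0}"
proof (rule lv_ideal_subset)
  have "rep r (rep x f) s = 0" if "\<forall>f s. rep x f s = 0" for r x :: "'k freealg" and f s
  proof -
    have "rep x f = (\<lambda>s. 0)" using that by auto
    then show ?thesis by (simp add: rep_zero_fun)
  qed
  then show "two_sided_ideal {x :: 'k freealg. \<forall>f s. rep x f s = 0}"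
    unfolding two_sided_ideal_def by (simp add: rep_add rep_mult)
  have case_nat_tail: "case_nat (s 0) (\<lambda>i. s (Suc i)) = s" for s :: "nat \<Rightarrow> bool"
    by (rule ext) (simp split: nat.split)
  have "rep (gen La * gen Las + gen Lb * gen Lbs - 1 :: 'k freealg) f s = 0" for f s
    using case_nat_tail[of s]
    by (cases "s 0") (simp_all add: rep_diff rep_add rep_1 rep_mult gen_eq_mon rep_mon)
  then show "leavitt_relations \<subseteq> {x :: 'k freealg. \<forall>f s. rep x f s = 0}"
    unfolding leavitt_relations_def
    by (simp add: rep_diff rep_1 rep_mult gen_eq_mon rep_mon)
qed

lemma not_lv_eq_a_astar_1: "\<not> lv_eq (gen La * gen Las) (1 :: 'k::comm_ring_1 freealg)"
proof
  assume "lv_eq (gen La * gen Las) (1 :: 'k freealg)"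
  then have "rep (gen La * gen Las - 1 :: 'k freealg) (\<lambda>_. 1) (\<lambda>_. False) = 0"
    using lv_ideal_subset_rep_kernel unfolding lv_eq_def by blast
  then show False
    by (simp add: rep_diff rep_1 rep_mult gen_eq_mon rep_mon)
qed

section \<open>Failure of graded direct finiteness and graded unit-regularity\<close>

lemma lv_homog_gen: "lv_homog (gen l)"
  unfolding lv_homog_def gen_def by (intro exI[of _ "gen l"] exI[of _ "ldeg l"]) (simp add: gen_def)

lemma lv_eq_gen_astar_a: "lv_eq (gen Las * gen La) (1 :: 'k::ring_1 freealg)"
  using lv_eq_astar_a by (simp add: gen_eq_mon mon_append[symmetric])

theorem not_graded_directly_finite: "\<not> lv_graded_directly_finite TYPE('k::comm_ring_1)"
  unfolding lv_graded_directly_finite_def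
  using lv_homog_gen lv_eq_gen_astar_a not_lv_eq_a_astar_1 by blast

lemma one_sided_inverse_two_sided_of_inner_inverse:
  fixes x a u v :: "'k::ring_1 freealg"
  assumes xa: "lv_eq (x * a) 1" and xux: "lv_eq (x * u * x) x" and uv: "lv_eq (u * v) 1"
  shows "lv_eq (a * x) 1"
proof -
  have "lv_eq (x * u) (x * u * (x * a))"
    using lv_eq_sym[OF lv_eq_mult_left[OF xa, of "x * u"]] by simp
  also have "\<dots> = (x * u * x) * a" by (simp add: mult.assoc)
  also have "lv_eq \<dots> 1" using lv_eq_mult_right[OF xux] xa by (rule lv_eq_trans)
  finally have xu: "lv_eq (x * u) 1" .
  have "lv_eq x (x * u * v)"
    using lv_eq_sym[OF lv_eq_mult_left[OF uv, of x]] by (simp add: mult.assoc)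
  also have "lv_eq \<dots> v" using lv_eq_mult_right[OF xu, of v] by simp
  finally have xv: "lv_eq x v" .
  have ux: "lv_eq (u * x) 1" using lv_eq_trans[OF lv_eq_mult_left[OF xv] uv] .
  have "lv_eq a (u * (x * a))"
    using lv_eq_sym[OF lv_eq_mult_right[OF ux, of a]] by (simp add: mult.assoc)
  also have "lv_eq \<dots> u" using lv_eq_mult_left[OF xa, of u] by simp
  finally have "lv_eq (a * x) (u * x)" by (rule lv_eq_mult_right)
  then show ?thesis using ux by (rule lv_eq_trans)
qed

theorem not_graded_unit_regular: "\<not> lv_graded_unit_regular TYPE('k::comm_ring_1)"
proof
  assume "lv_graded_unit_regular TYPE('k)"
  then obtain u :: "'k freealg" where u: "lv_unit u" "lv_eq (gen Las * u * gen Las) (gen Las)"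
    unfolding lv_graded_unit_regular_def using lv_homog_gen by blast
  then obtain v where "lv_eq (u * v) 1"
    unfolding lv_unit_def by blast
  with lv_eq_gen_astar_a u(2) have "lv_eq (gen La * gen Las) (1 :: 'k freealg)"
    by (rule one_sided_inverse_two_sided_of_inner_inverse)
  then show False using not_lv_eq_a_astar_1 by blast
qed

theorem mainTheorem16:
  fixes \<sigma> :: "'k::field \<Rightarrow> 'k"
  assumes "field_involution \<sigma>" and "positive_definite \<sigma>"
  shows "lv_graded_star_regular \<sigma> \<and> \<not> lv_graded_unit_regular TYPE('k)
         \<and> \<not> lv_graded_directly_finite TYPE('k)"
proof -
  interpret positive_definite_field \<sigma>
    using assms by unfold_locales
  show ?thesis
    using graded_star_regular not_graded_unit_regular not_graded_directly_finite by blast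
qed

end
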